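(* Let $n\ge1$. Among the elements of $R$ whose binary representation has length $2n+5$, exactly one has binary representation beginning with $1000$, namely $[1000(10)^n0]_2$; moreover $[1000(10)^n0]_2$ is the smallest element of $R$ whose binary representation has length $2n+5$.
   Context: Stern's sequence $(a(n))_{n\ge0}$: $a(0)=0$, $a(1)=1$, $a(2n)=a(n)$, $a(2n+1)=a(n)+a(n+1)$; $s(n)=a(n+1)$. $R$ is the set of record-setters of $s$, i.e. indices $v\ge0$ with $s(i)<s(v)$ for all $i<v$. Binary representations have no leading zeros. For a binary string $x$, $[x]_2$ is the integer it represents in base 2; $x^i$ denotes $i$-fold concatenation. *)

theory Defs
  imports Main
begin

function stern :: "nat \<Rightarrow> nat" where
  "stern n = (if n = 0 then 0 else if n = 1 then 1
              else if even n then stern (n div 2)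
              else stern (n div 2) + stern (n div 2 + 1))"
  by auto
termination
  by (relation "measure id") (auto elim!: oddE)

declare stern.simps [simp del]

definition s :: "nat \<Rightarrow> nat" where
  "s n = stern (n + 1)"

definition R :: "nat set" where
  "R = {v. \<forall>i<v. s i < s v}"

text \<open>Binary representation without leading zeros, most significant bit first
  (True = 1, False = 0); 0 is represented by the single digit 0.\<close>
fun bin_aux :: "nat \<Rightarrow> bool list" where
  "bin_aux n = (if n = 0 then [] else bin_aux (n div 2) @ [odd n])"

definition binrep :: "nat \<Rightarrow> bool list" where
  "binrep n = (if n = 0 then [False] else bin_aux n)"

definition bin_val :: "bool list \<Rightarrow> nat" where
  "bin_val xs = foldl (\<lambda>acc b. 2 * acc + (if b then 1 else 0)) 0 xs"

definition str_pow :: "'a list \<Rightarrow> nat \<Rightarrow> 'a list" where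
  "str_pow x i = concat (replicate i x)"

end

theory Submission
  imports Defs "HOL-Number_Theory.Fib"
begin

(* Reading the binary digits of m from the left, the pair (stern m, stern (m + 1)) evolves by
   (x, y) -> (x + y, y) on a 1 and (x, y) -> (x, x + y) on a 0, so reading a word of length k from
   (x, y) ends with a second coordinate at most F(k) * min x y + F(k + 1) * max x y.  Hence s stays at most F(2n + 5) below
   2^(2n + 4), while s(w) = F(2n + 1) + 4 F(2n + 2) is larger, and every v = [1000u] of the same
   length as w has s(v) <= s(w).  If moreover v < w, then u lies below (10)^n 0, and comparing the
   runs on u from (1, 4) and on 0(10)^n from (3, 2) inside an invariant cone of state pairs gives
   s(v) <= s([1010(10)^n]), an earlier index.  So w is the only record-setter starting with 1000,
   and every smaller number of its length starts with 1000. *)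

declare bin_aux.simps [simp del]

lemma stern_0 [simp]: "stern 0 = 0"
  by (subst stern.simps) simp

lemma stern_1 [simp]: "stern (Suc 0) = 1"
  by (subst stern.simps) simp

lemma stern_double: "stern (2 * m) = stern m"
  by (cases "m = 0") (simp, subst stern.simps, simp)

lemma stern_double_Suc: "stern (2 * m + 1) = stern m + stern (m + 1)"
  by (cases "m = 0") (simp, subst stern.simps, simp)

lemma bin_val_Nil [simp]: "bin_val [] = 0"
  by (simp add: bin_val_def)

lemma bin_val_snoc [simp]: "bin_val (xs @ [b]) = 2 * bin_val xs + of_bool b"
  by (simp add: bin_val_def)

lemma bin_val_append: "bin_val (xs @ ys) = bin_val xs * 2 ^ length ys + bin_val ys"
  by (induction ys rule: rev_induct) (simp_all flip: append_assoc)

lemma bin_val_Cons: "bin_val (b # xs) = of_bool b * 2 ^ length xs + bin_val xs"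
  using bin_val_append[of "[b]" xs] by (simp add: bin_val_def)

lemma bin_val_less_power: "bin_val xs < 2 ^ length xs"
  by (induction xs rule: rev_induct) auto

lemma ex_bin_val_eq:
  assumes "x < 2 ^ k"
  shows "\<exists>u. length u = k \<and> bin_val u = x"
  using assms
proof (induction k arbitrary: x)
  case 0
  then show ?case by simp
next
  case (Suc k)
  define b where "b = (2 ^ k \<le> x)"
  have "x - of_bool b * 2 ^ k < 2 ^ k"
    using Suc.prems by (auto simp: b_def)
  then obtain u where "length u = k" "bin_val u = x - of_bool b * 2 ^ k"
    using Suc.IH by blast
  then show ?case
    by (intro exI[of _ "b # u"]) (auto simp: bin_val_Cons b_def)
qed

lemma ex_bin_val_True_Cons:
  assumes "0 < v"
  shows "\<exists>r. v = bin_val (True # r)"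
proof -
  obtain k where "2 ^ k \<le> v" "v < 2 ^ Suc k"
    using ex_power_ivl1[of 2 v] assms by auto
  moreover have "v - 2 ^ k < 2 ^ k"
    using \<open>v < 2 ^ Suc k\<close> by simp
  ultimately obtain r where "length r = k" "bin_val r = v - 2 ^ k"
    using ex_bin_val_eq by blast
  then show ?thesis
    using \<open>2 ^ k \<le> v\<close> by (intro exI[of _ r]) (simp add: bin_val_Cons)
qed

lemma binrep_bin_val_True_Cons [simp]: "binrep (bin_val (True # r)) = True # r"
proof (induction r rule: rev_induct)
  case Nil
  then show ?case by (simp add: binrep_def bin_val_Cons bin_aux.simps)
next
  case (snoc b r)
  define m where "m = bin_val (True # r)"
  have "0 < m"
    by (simp add: m_def bin_val_Cons)
  moreover have "bin_val (True # r @ [b]) = 2 * m + of_bool b"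
    using bin_val_snoc[of "True # r" b] by (simp add: m_def)
  moreover have "bin_aux (2 * m + of_bool b) = bin_aux m @ [b]"
    using \<open>0 < m\<close> by (subst bin_aux.simps) auto
  ultimately show ?case
    using snoc by (simp add: binrep_def m_def)
qed

lemma bin_val_binrep [simp]: "bin_val (binrep v) = v"
proof (cases "v = 0")
  case True
  then show ?thesis by (simp add: binrep_def bin_val_def)
next
  case False
  then obtain r where "v = bin_val (True # r)"
    using ex_bin_val_True_Cons by blast
  then show ?thesis by simp
qed

lemma two_power_le_of_length_binrep:
  assumes "length (binrep v) = Suc k" "0 < k"
  shows "2 ^ k \<le> v"
proof -
  have "0 < v"
    using assms by (auto simp: binrep_def split: if_splits)
  then obtain r where "v = bin_val (True # r)"
    using ex_bin_val_True_Cons by blast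
  moreover have "length r = k"
    using assms(1) calculation by simp
  ultimately show ?thesis
    by (simp add: bin_val_Cons)
qed

subsection \<open>Reading a binary string\<close>

fun stern_step :: "nat \<times> nat \<Rightarrow> bool \<Rightarrow> nat \<times> nat" where
  "stern_step (x, y) True = (x + y, y)"
| "stern_step (x, y) False = (x, x + y)"

lemma foldl_stern_step_bin_val:
  "foldl stern_step (stern (bin_val xs), stern (bin_val xs + 1)) ys
     = (stern (bin_val (xs @ ys)), stern (bin_val (xs @ ys) + 1))"
proof (induction ys rule: rev_induct)
  case Nil
  then show ?case by simp
next
  case (snoc b ys)
  define m where "m = bin_val (xs @ ys)"
  have "bin_val (xs @ ys @ [b]) = 2 * m + of_bool b"
    using bin_val_snoc[of "xs @ ys" b] by (simp add: m_def)
  moreover have "stern (2 * m + 1 + 1) = stern (m + 1)"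
    using stern_double[of "m + 1"] by (simp add: algebra_simps)
  ultimately show ?case
    using snoc stern_double[of m] stern_double_Suc[of m] by (cases b) (simp_all add: m_def)
qed

lemma s_bin_val_True_Cons: "s (bin_val (True # r)) = snd (foldl stern_step (1, 1) r)"
proof -
  have "bin_val [True] = 1"
    by (simp add: bin_val_def)
  then have "foldl stern_step (stern 1, stern 2) r
      = (stern (bin_val (True # r)), stern (bin_val (True # r) + 1))"
    using foldl_stern_step_bin_val[of "[True]" r] by (metis append_Cons append_Nil one_add_one)
  moreover have "stern 2 = 1"
    using stern_double[of 1] by simp
  ultimately show ?thesis
    by (simp add: s_def)
qed

lemma snd_foldl_stern_step_le_fib:
  "snd (foldl stern_step (x, y) u) \<le> fib (length u) * min x y + fib (Suc (length u)) * max x y"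
proof (induction u arbitrary: x y)
  case Nil
  then show ?case by simp
next
  case (Cons b u)
  obtain x' y' where step: "stern_step (x, y) b = (x', y')"
    by fastforce
  have "min x' y' \<le> max x y" "max x' y' = min x y + max x y"
    using step by (cases b; auto)+
  have "snd (foldl stern_step (x, y) (b # u))
      \<le> fib (length u) * min x' y' + fib (Suc (length u)) * max x' y'"
    using Cons.IH[of x' y'] step by simp
  also have "\<dots> \<le> fib (length u) * max x y + fib (Suc (length u)) * (min x y + max x y)"
    using \<open>min x' y' \<le> max x y\<close> \<open>max x' y' = min x y + max x y\<close> by simp
  also have "\<dots> = fib (length (b # u)) * min x y + fib (Suc (length (b # u))) * max x y"
    by (simp add: algebra_simps)
  finally show ?case .
qed

lemma s_le_fib:
  assumes "i < 2 ^ k"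
  shows "s i \<le> fib (k + 1)"
proof (cases "i = 0")
  case True
  then show ?thesis
    using fib_neq_0_nat[of "k + 1"] by (simp add: s_def)
next
  case False
  then obtain r where r: "i = bin_val (True # r)"
    using ex_bin_val_True_Cons by blast
  then have "(2::nat) ^ length r \<le> i"
    by (simp add: bin_val_Cons)
  then have "(2::nat) ^ length r < 2 ^ k"
    using assms by linarith
  then have "Suc (Suc (length r)) \<le> Suc k"
    by simp
  have "s i \<le> fib (length r) + fib (Suc (length r))"
    using snd_foldl_stern_step_le_fib[of 1 1 r] r by (simp add: s_bin_val_True_Cons)
  also have "\<dots> \<le> fib (k + 1)"
    using fib_mono[OF \<open>Suc (Suc (length r)) \<le> Suc k\<close>] by simp
  finally show ?thesis .
qed

abbreviation alt :: "nat \<Rightarrow> bool list" where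
  "alt n \<equiv> str_pow [True, False] n"

lemma alt_0 [simp]: "alt 0 = []"
  by (simp add: str_pow_def)

lemma alt_Suc [simp]: "alt (Suc n) = True # False # alt n"
  by (simp add: str_pow_def)

lemma length_alt [simp]: "length (alt n) = 2 * n"
  by (induction n) simp_all

lemma snd_foldl_alt:
  "snd (foldl stern_step (a, b) (alt n)) = fib (2 * n) * a + fib (2 * n + 1) * b"
proof (induction n arbitrary: a b)
  case 0
  then show ?case by simp
next
  case (Suc n)
  have "fib (2 * Suc n) = fib (2 * n) + fib (2 * n + 1)"
       "fib (2 * Suc n + 1) = fib (2 * n) + 2 * fib (2 * n + 1)"
    by (simp_all add: numeral_2_eq_2)
  moreover have "foldl stern_step (a, b) (alt (Suc n)) = foldl stern_step (a + b, a + 2 * b) (alt n)"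
    by (simp add: mult_2 add.assoc)
  ultimately show ?case
    using Suc.IH[of "a + b" "a + 2 * b"] by (simp add: algebra_simps)
qed

lemma snd_foldl_alt_False:
  "snd (foldl stern_step (a, b) (alt n @ [False])) = fib (2 * n + 1) * a + fib (2 * n + 2) * b"
proof (induction n arbitrary: a b)
  case 0
  then show ?case by simp
next
  case (Suc n)
  have "fib (2 * Suc n + 1) = fib (2 * n + 1) + fib (2 * n + 2)"
       "fib (2 * Suc n + 2) = fib (2 * n + 1) + 2 * fib (2 * n + 2)"
    by (simp_all add: numeral_2_eq_2)
  moreover have "foldl stern_step (a, b) (alt (Suc n) @ [False])
      = foldl stern_step (a + b, a + 2 * b) (alt n @ [False])"
    by (simp add: mult_2 add.assoc)
  ultimately show ?case
    using Suc.IH[of "a + b" "a + 2 * b"] by (simp add: algebra_simps)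
qed

subsection \<open>A comparison principle\<close>

text \<open>A cone of pairs of states, invariant when the first state reads \<open>10\<close> and the second
  reads \<open>01\<close>; its middle inequality is what makes a leading \<open>0\<close> followed by the
  Fibonacci bound lose against \<open>0(10)\<^sup>n\<close>.\<close>

definition dominated :: "nat \<Rightarrow> nat \<Rightarrow> nat \<Rightarrow> nat \<Rightarrow> bool" where
  "dominated x y p q \<longleftrightarrow>
     x \<le> p \<and> 3 * x + 2 * y \<le> 3 * p + 2 * q \<and> 7 * x + 12 * y \<le> 13 * p + 8 * q"

lemma dominated_step: "dominated x y p q \<Longrightarrow> dominated (x + y) (x + 2 * y) (2 * p + q) (p + q)"
  unfolding dominated_def by simp

lemma dominated_combination_le:
  assumes "dominated x y p q" "B \<le> 2 * A"
  shows "A * x + B * (x + y) \<le> A * p + B * (p + q)"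
proof (cases "x + y \<le> p + q")
  case True
  moreover have "x \<le> p"
    using assms(1) by (simp add: dominated_def)
  ultimately show ?thesis
    by (simp add: add_mono)
next
  case False
  define d where "d = x + y - (p + q)"
  define e where "e = p - x"
  have "x + y = p + q + d"
    using False by (simp add: d_def)
  have "p = x + e"
    using assms(1) by (simp add: e_def dominated_def)
  have "2 * d \<le> e"
    using assms(1) unfolding dominated_def d_def e_def by linarith
  have "B * d \<le> A * (2 * d)"
    using assms(2) by (simp add: mult.left_commute)
  also have "\<dots> \<le> A * e"
    using \<open>2 * d \<le> e\<close> by simp
  finally have "B * d \<le> A * e" .
  have "A * x + B * (x + y) = A * x + B * (p + q) + B * d"
    using \<open>x + y = p + q + d\<close> by (simp add: distrib_left)
  also have "\<dots> \<le> A * x + B * (p + q) + A * e"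
    using \<open>B * d \<le> A * e\<close> by simp
  also have "\<dots> = A * p + B * (p + q)"
    using \<open>p = x + e\<close> by (simp add: distrib_left)
  finally show ?thesis .
qed

lemma snd_foldl_le_of_less_alt:
  assumes "dominated x y p q" "length u = 2 * n + 1" "bin_val u < bin_val (alt n @ [False])"
  shows "snd (foldl stern_step (x, y) u) \<le> snd (foldl stern_step (p, q) (False # alt n))"
  using assms
proof (induction n arbitrary: x y p q u)
  case 0
  then show ?case by (simp add: bin_val_Cons)
next
  case (Suc n)
  obtain b u' where u: "u = b # u'" and "length u' = 2 * n + 2"
    using Suc.prems(2) by (cases u) auto
  show ?case
  proof (cases b)
    case False
    have "fib (2 * n + 3) \<le> 2 * fib (2 * n + 2)"
      using fib_Suc_mono[of "2 * n + 1"] by (simp add: numeral_3_eq_3 numeral_2_eq_2)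
    then have "fib (2 * n + 2) * x + fib (2 * n + 3) * (x + y)
        \<le> fib (2 * n + 2) * p + fib (2 * n + 3) * (p + q)"
      using dominated_combination_le[OF Suc.prems(1)] by blast
    moreover have "snd (foldl stern_step (x, y) u) \<le> fib (2 * n + 2) * x + fib (2 * n + 3) * (x + y)"
      using snd_foldl_stern_step_le_fib[of x "x + y" u'] u False \<open>length u' = 2 * n + 2\<close>
      by (simp add: numeral_3_eq_3)
    moreover have "snd (foldl stern_step (p, q) (False # alt (Suc n)))
        = fib (2 * n + 2) * p + fib (2 * n + 3) * (p + q)"
      using snd_foldl_alt[of p "p + q" "Suc n"] by (simp add: numeral_3_eq_3)
    ultimately show ?thesis
      by simp
  next
    case True
    obtain c t where "u' = c # t" and "length t = 2 * n + 1"
      using \<open>length u' = 2 * n + 2\<close> by (cases u') auto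
    define P :: nat where "P = 2 ^ (2 * n + 1)"
    have "bin_val u = 2 * P + of_bool c * P + bin_val t"
      using u True \<open>u' = c # t\<close> \<open>length t = _\<close> by (simp add: bin_val_Cons P_def)
    moreover have "bin_val (alt (Suc n) @ [False]) = 2 * P + bin_val (alt n @ [False])"
      by (simp add: bin_val_Cons P_def)
    moreover have "bin_val (alt n @ [False]) < P"
      using bin_val_less_power[of "alt n @ [False]"] by (simp add: P_def)
    ultimately have "of_bool c * P + bin_val t < bin_val (alt n @ [False])"
        "bin_val (alt n @ [False]) < P"
      using Suc.prems(3) by linarith+
    then have "\<not> c" and t_less: "bin_val t < bin_val (alt n @ [False])"
      by (cases c; simp)+
    have "snd (foldl stern_step (x, y) u) = snd (foldl stern_step (x + y, x + 2 * y) t)"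
      using u True \<open>u' = c # t\<close> \<open>\<not> c\<close> by (simp add: mult_2 add.assoc)
    also have "\<dots> \<le> snd (foldl stern_step (2 * p + q, p + q) (False # alt n))"
      using Suc.IH[OF dominated_step[OF Suc.prems(1)] \<open>length t = _\<close> t_less] .
    also have "\<dots> = snd (foldl stern_step (p, q) (False # alt (Suc n)))"
    proof -
      have "stern_step (stern_step (stern_step (p, q) False) True) False
          = stern_step (2 * p + q, p + q) False"
        by simp
      then show ?thesis
        by (simp only: foldl_Cons alt_Suc)
    qed
    finally show ?thesis .
  qed
qed

subsection \<open>The record-setter \<open>[1000(10)\<^sup>n0]\<^sub>2\<close>\<close>

definition record_1000 :: "nat \<Rightarrow> nat" where
  "record_1000 n = bin_val (True # False # False # False # alt n @ [False])"

lemma bin_val_1000: "bin_val (True # False # False # False # u) = 8 * 2 ^ length u + bin_val u"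
  by (simp add: bin_val_Cons)

lemma s_bin_val_1000: "s (bin_val (True # False # False # False # u)) = snd (foldl stern_step (1, 4) u)"
  by (simp add: s_bin_val_True_Cons numeral_eq_Suc)

lemma record_1000_less: "record_1000 n < 9 * 2 ^ (2 * n + 1)"
  using bin_val_1000[of "alt n @ [False]"] bin_val_less_power[of "alt n @ [False]"]
  by (simp add: record_1000_def)

lemma s_record_1000: "s (record_1000 n) = fib (2 * n + 1) + 4 * fib (2 * n + 2)"
  using snd_foldl_alt_False[of 1 4 n] by (simp add: record_1000_def s_bin_val_1000)

lemma fib_less_s_record_1000:
  assumes "1 \<le> n"
  shows "fib (2 * n + 5) < s (record_1000 n)"
proof -
  have "fib (2 * n + 5) = 2 * fib (2 * n + 1) + 3 * fib (2 * n + 2)"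
    by (simp add: numeral_eq_Suc)
  moreover have "fib (2 * n + 1) < fib (2 * n + 2)"
    using fib_neq_0_nat[of "2 * n"] assms by (simp add: numeral_2_eq_2)
  ultimately show ?thesis
    by (simp add: s_record_1000)
qed

lemma s_1000_le_s_record_1000:
  assumes "length u = 2 * n + 1"
  shows "s (bin_val (True # False # False # False # u)) \<le> s (record_1000 n)"
  using snd_foldl_stern_step_le_fib[of 1 4 u] assms by (simp add: s_bin_val_1000 s_record_1000)

lemma s_1000_le_s_alt:
  assumes "length u = 2 * n + 1" "bin_val (True # False # False # False # u) < record_1000 n"
  shows "s (bin_val (True # False # False # False # u)) \<le> s (bin_val (alt (n + 2)))"
proof -
  have "bin_val u < bin_val (alt n @ [False])"
    using assms by (simp add: record_1000_def bin_val_1000)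
  moreover have "dominated 1 4 3 2"
    by (simp add: dominated_def)
  ultimately have "snd (foldl stern_step (1, 4) u) \<le> snd (foldl stern_step (3, 2) (False # alt n))"
    using snd_foldl_le_of_less_alt assms(1) by blast
  then show ?thesis
    by (simp add: s_bin_val_1000 s_bin_val_True_Cons numeral_eq_Suc)
qed

lemma ex_1000_of_bounds:
  assumes "8 * 2 ^ k \<le> i" "i < 9 * 2 ^ k"
  shows "\<exists>u. length u = k \<and> i = bin_val (True # False # False # False # u)"
proof -
  have "i - 8 * 2 ^ k < 2 ^ k"
    using assms by simp
  then obtain u where "length u = k" "bin_val u = i - 8 * 2 ^ k"
    using ex_bin_val_eq by blast
  then show ?thesis
    using assms(1) by (intro exI[of _ u]) (simp add: bin_val_1000)
qed

lemma eq_record_1000_if_in_R: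
  assumes "length u = 2 * n + 1" and v: "v = bin_val (True # False # False # False # u)" "v \<in> R"
  shows "v = record_1000 n"
proof (rule ccontr)
  assume "v \<noteq> record_1000 n"
  then consider "v < record_1000 n" | "record_1000 n < v"
    by linarith
  then show False
  proof cases
    case 1
    have "bin_val (alt (n + 2)) < 2 ^ (2 * n + 4)"
      using bin_val_less_power[of "alt (n + 2)"] by (simp add: power_add)
    also have "\<dots> \<le> v"
      using v assms(1) by (simp add: bin_val_1000 power_add)
    finally show False
      using s_1000_le_s_alt[OF assms(1)] 1 v by (auto simp: R_def)
  next
    case 2
    then show False
      using s_1000_le_s_record_1000[OF assms(1)] v by (auto simp: R_def)
  qed
qed

lemma record_1000_in_R:
  assumes "1 \<le> n"
  shows "record_1000 n \<in> R"
  unfolding R_def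
proof (intro CollectI allI impI)
  have small: "s j \<le> fib (2 * n + 5)" if "j < 2 ^ (2 * n + 4)" for j
    using s_le_fib[OF that] by (simp add: add.commute)
  fix i
  assume "i < record_1000 n"
  have "s i \<le> fib (2 * n + 5)"
  proof (cases "i < 2 ^ (2 * n + 4)")
    case True
    then show ?thesis
      by (rule small)
  next
    case False
    then have "8 * 2 ^ (2 * n + 1) \<le> i"
      by (simp add: power_add)
    moreover have "i < 9 * 2 ^ (2 * n + 1)"
      using \<open>i < record_1000 n\<close> record_1000_less[of n] by linarith
    ultimately obtain u where u: "length u = 2 * n + 1" "i = bin_val (True # False # False # False # u)"
      using ex_1000_of_bounds by blast
    have "bin_val (alt (n + 2)) < 2 ^ (2 * n + 4)"
      using bin_val_less_power[of "alt (n + 2)"] by (simp add: power_add)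
    then show ?thesis
      using small s_1000_le_s_alt[OF u(1)] u(2) \<open>i < record_1000 n\<close> by (meson le_trans)
  qed
  then show "s i < s (record_1000 n)"
    using fib_less_s_record_1000[OF assms] by simp
qed

lemma eq_record_1000_if_in_R_prefix:
  assumes "v \<in> R" "length (binrep v) = 2 * n + 5" "take 4 (binrep v) = [True, False, False, False]"
  shows "v = record_1000 n"
proof -
  have "binrep v = True # False # False # False # drop 4 (binrep v)"
    using assms(3) append_take_drop_id[of 4 "binrep v"] by simp
  then have "v = bin_val (True # False # False # False # drop 4 (binrep v))"
    using bin_val_binrep[of v] by metis
  then show ?thesis
    using eq_record_1000_if_in_R[of "drop 4 (binrep v)" n v] assms(1,2) by simp
qed

lemma record_1000_le_if_in_R:
  assumes "v \<in> R" "length (binrep v) = 2 * n + 5"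
  shows "record_1000 n \<le> v"
proof (rule ccontr)
  assume "\<not> record_1000 n \<le> v"
  then have "v < 9 * 2 ^ (2 * n + 1)"
    using record_1000_less[of n] by linarith
  moreover have "8 * 2 ^ (2 * n + 1) \<le> v"
    using two_power_le_of_length_binrep[of v "2 * n + 4"] assms(2) by (simp add: power_add)
  ultimately obtain u where "length u = 2 * n + 1" "v = bin_val (True # False # False # False # u)"
    using ex_1000_of_bounds by blast
  then have "v = record_1000 n"
    using eq_record_1000_if_in_R assms(1) by blast
  then show False
    using \<open>\<not> record_1000 n \<le> v\<close> by simp
qed

theorem mainTheorem16:
  fixes n :: nat
  assumes "n \<ge> 1"
  defines "w \<equiv> bin_val ([True, False, False, False] @ str_pow [True, False] n @ [False])"
  shows "{v \<in> R. length (binrep v) = 2 * n + 5 \<and>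
            take 4 (binrep v) = [True, False, False, False]} = {w}
       \<and> w \<in> R \<and> length (binrep w) = 2 * n + 5
       \<and> (\<forall>v \<in> R. length (binrep v) = 2 * n + 5 \<longrightarrow> w \<le> v)"
proof -
  have w: "w = record_1000 n"
    by (simp add: w_def record_1000_def)
  have binrep_w: "binrep w = True # False # False # False # alt n @ [False]"
    by (simp add: w_def)
  have "w \<in> R"
    using record_1000_in_R[OF assms(1)] w by simp
  moreover have "length (binrep w) = 2 * n + 5" "take 4 (binrep w) = [True, False, False, False]"
    using binrep_w by (simp_all add: numeral_eq_Suc)
  ultimately show ?thesis
    using eq_record_1000_if_in_R_prefix record_1000_le_if_in_R unfolding w by blast
qed

end
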